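(* For every $0<\lambda,\varepsilon\le1$ there exists $p_0=p_0(\lambda,\varepsilon)<1$ such that if $m,n\in\mathbb N$ satisfy $\lambda\log n\le m\le n$, then Bernoulli-$p$ bond percolation on the box $B(n,m)$ satisfies $\mathbb P_p(x\leftrightarrow y)\ge 1-\varepsilon$ for every $p\ge p_0$ and all $x,y\in B(n,m)$.
   Context: $B(n,m)=\{(x_1,x_2)\in\mathbb Z^2:|x_1|\le n,|x_2|\le m\}$, regarded as the subgraph of the square lattice $\mathbb Z^2$ induced by this set. Bernoulli-$p$ bond percolation keeps each edge independently with probability $p$; $\{x\leftrightarrow y\}$ is the event that $x$ and $y$ are joined by an open path. *)

theory Defs
  imports Complex_Main
begin

definition box :: "nat \<Rightarrow> nat \<Rightarrow> (int \<times> int) set" where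
  "box n m = {(a, b). \<bar>a\<bar> \<le> int n \<and> \<bar>b\<bar> \<le> int m}"

definition lattice_adj :: "int \<times> int \<Rightarrow> int \<times> int \<Rightarrow> bool" where
  "lattice_adj u v \<longleftrightarrow> \<bar>fst u - fst v\<bar> + \<bar>snd u - snd v\<bar> = 1"

definition box_edges :: "nat \<Rightarrow> nat \<Rightarrow> (int \<times> int) set set" where
  "box_edges n m = {{u, v} | u v. u \<in> box n m \<and> v \<in> box n m \<and> lattice_adj u v}"

definition joined :: "'a set set \<Rightarrow> 'a \<Rightarrow> 'a \<Rightarrow> bool" where
  "joined S x y \<longleftrightarrow> (x, y) \<in> {(u, v). {u, v} \<in> S}\<^sup>*"

text \<open>Probability of an event (a predicate on the set of open edges) under Bernoulli-p
  bond percolation on the finite edge set E: each edge open independently with probability p.\<close>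
definition perc_prob :: "real \<Rightarrow> 'e set \<Rightarrow> ('e set \<Rightarrow> bool) \<Rightarrow> real" where
  "perc_prob p E A = (\<Sum>S \<in> {S. S \<subseteq> E \<and> A S}. p ^ card S * (1 - p) ^ card (E - S))"

end

theory Submission
  imports Defs
begin

text \<open>A Peierls argument. If \<open>x\<close> and \<open>y\<close> are not joined, the edges with exactly one endpoint
  in the open cluster of \<open>x\<close> are closed, and every unit face meets an even number of them; so they
  are the jumps of a mod-2 potential that separates \<open>x\<close> from \<open>y\<close>. Some \<open>*\<close>-connected component
  \<open>C\<close> of these edges still separates. A \<open>*\<close>-walk of length \<open>L < 2|C|\<close> through all of \<open>C\<close> stays
  in the square of radius \<open>L\<close> around its first edge, and the part of the box outside such a square
  is connected unless \<open>L \<ge> m\<close>; hence \<open>L\<close> is at least the distance from the first edge to \<open>x\<close> or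
  to \<open>y\<close>, or at least \<open>m\<close>. There are at most \<open>18^(L-1)\<close> \<open>*\<close>-walks of length \<open>L\<close> from a given
  edge, and each is closed with probability at most \<open>(1-p)^(L/2)\<close>. Summed over the first edge,
  the walks forced by \<open>x\<close> or \<open>y\<close> give two convergent geometric sums, and those of length \<open>\<ge> m\<close>
  give at most a small multiple of \<open>|B(n,m)| \<delta>^m\<close> with \<open>\<delta> \<le> e^(-2/\<lambda>)\<close>, which is bounded because
  \<open>|B(n,m)| \<le> 9n\<^sup>2\<close> and \<open>\<delta>^m \<le> n^(-2)\<close> for \<open>m \<ge> \<lambda> log n\<close>.\<close>

section \<open>Edges of the box\<close>

text \<open>An edge of \<open>\<int>\<^sup>2\<close> is coded by its lower-left endpoint together with a flag that is
  \<open>True\<close> for the horizontal edge to the right and \<open>False\<close> for the vertical edge upwards.\<close>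
type_synonym edge = "(int \<times> int) \<times> bool"

definition far_end :: "edge \<Rightarrow> int \<times> int" where
  "far_end e = (if snd e then (fst (fst e) + 1, snd (fst e)) else (fst (fst e), snd (fst e) + 1))"

definition edge_set :: "edge \<Rightarrow> (int \<times> int) set" where
  "edge_set e = {fst e, far_end e}"

definition box_edge_codes :: "nat \<Rightarrow> nat \<Rightarrow> edge set" where
  "box_edge_codes n m = {e. fst e \<in> box n m \<and> far_end e \<in> box n m}"

lemma box_eq_Times: "box n m = {- int n..int n} \<times> {- int m..int m}"
  by (auto simp: box_def)

lemma finite_box: "finite (box n m)"
  by (simp add: box_eq_Times)

lemma card_box: "card (box n m) = (2 * n + 1) * (2 * m + 1)"
proof -
  have "card {- int k..int k} = 2 * k + 1" for k by simp
  then show ?thesis by (simp add: box_eq_Times card_cartesian_product)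
qed

lemma box_edge_codes_subset: "box_edge_codes n m \<subseteq> box n m \<times> UNIV"
  by (auto simp: box_edge_codes_def)

lemma finite_box_edge_codes: "finite (box_edge_codes n m)"
  using finite_subset[OF box_edge_codes_subset] finite_box by auto

lemma inj_edge_set: "inj edge_set"
  unfolding inj_def by (auto simp: edge_set_def far_end_def doubleton_eq_iff split: if_splits)

lemma lattice_adj_far_end: "lattice_adj (fst e) (far_end e)"
  by (auto simp: lattice_adj_def far_end_def)

lemma lattice_adj_edge_code:
  assumes "lattice_adj a b"
  obtains e where "fst e = a \<and> far_end e = b \<or> fst e = b \<and> far_end e = a"
proof -
  obtain a1 a2 b1 b2 where ab: "a = (a1, a2)" "b = (b1, b2)" by fastforce
  have "\<bar>a1 - b1\<bar> + \<bar>a2 - b2\<bar> = 1" using assms by (simp add: lattice_adj_def ab)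
  then have "b1 = a1 + 1 \<and> b2 = a2 \<or> a1 = b1 + 1 \<and> b2 = a2 \<or> b1 = a1 \<and> b2 = a2 + 1 \<or> b1 = a1 \<and> a2 = b2 + 1"
    by arith
  then show thesis
  proof (elim disjE)
    assume "b1 = a1 + 1 \<and> b2 = a2"
    then show thesis by (intro that[of "(a, True)"]) (simp add: far_end_def ab)
  next
    assume "a1 = b1 + 1 \<and> b2 = a2"
    then show thesis by (intro that[of "(b, True)"]) (simp add: far_end_def ab)
  next
    assume "b1 = a1 \<and> b2 = a2 + 1"
    then show thesis by (intro that[of "(a, False)"]) (simp add: far_end_def ab)
  next
    assume "b1 = a1 \<and> a2 = b2 + 1"
    then show thesis by (intro that[of "(b, False)"]) (simp add: far_end_def ab)
  qed
qed

lemma box_edges_eq_image: "box_edges n m = edge_set ` box_edge_codes n m"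
proof (intro set_eqI iffI)
  fix E assume "E \<in> box_edges n m"
  then obtain a b where ab: "E = {a, b}" "a \<in> box n m" "b \<in> box n m" "lattice_adj a b"
    by (auto simp: box_edges_def)
  obtain e where "fst e = a \<and> far_end e = b \<or> fst e = b \<and> far_end e = a"
    using ab(4) by (rule lattice_adj_edge_code)
  with ab show "E \<in> edge_set ` box_edge_codes n m"
    by (intro image_eqI[of _ _ e]) (auto simp: edge_set_def box_edge_codes_def)
next
  fix E assume "E \<in> edge_set ` box_edge_codes n m"
  then show "E \<in> box_edges n m"
    using lattice_adj_far_end unfolding box_edges_def box_edge_codes_def edge_set_def by blast
qed

lemma finite_box_edges: "finite (box_edges n m)"
  by (simp add: box_edges_eq_image finite_box_edge_codes)

section \<open>Lattice paths in the box\<close>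

definition adj_within :: "(int \<times> int) set \<Rightarrow> ((int \<times> int) \<times> (int \<times> int)) set" where
  "adj_within W = {(a, b). a \<in> W \<and> b \<in> W \<and> lattice_adj a b}"

lemma adj_within_rtrancl_sym:
  assumes "(u, v) \<in> (adj_within W)\<^sup>*"
  shows "(v, u) \<in> (adj_within W)\<^sup>*"
proof -
  have "(adj_within W)\<inverse> = adj_within W"
    by (auto simp: adj_within_def lattice_adj_def abs_minus_commute)
  then show ?thesis using rtrancl_converseI[OF assms] by simp
qed

lemma int_path_rtrancl:
  fixes b b' :: int
  assumes "b \<le> b'" and step: "\<And>t. b \<le> t \<Longrightarrow> t < b' \<Longrightarrow> (g t, g (t + 1)) \<in> r"
  shows "(g b, g b') \<in> r\<^sup>*"
proof -
  have "(g b, g (b + int k)) \<in> r\<^sup>*" if "b + int k \<le> b'" for k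
    using that
  proof (induction k)
    case (Suc k)
    then have "(g b, g (b + int k)) \<in> r\<^sup>*" "(g (b + int k), g (b + int k + 1)) \<in> r"
      by (auto intro: step)
    moreover have "b + int (Suc k) = b + int k + 1" by simp
    ultimately show ?case by (metis rtrancl_into_rtrancl)
  qed simp
  from this[of "nat (b' - b)"] show ?thesis using assms(1) by simp
qed

lemma segment_path:
  fixes b b' :: int
  assumes adj: "\<And>t. lattice_adj (g t) (g (t + 1))"
    and W: "\<And>t. min b b' \<le> t \<Longrightarrow> t \<le> max b b' \<Longrightarrow> g t \<in> W"
  shows "(g b, g b') \<in> (adj_within W)\<^sup>*"
proof -
  have "(g c, g c') \<in> (adj_within W)\<^sup>*" if "c \<le> c'" "{c..c'} = {min b b'..max b b'}" for c c' :: int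
    using that(1) by (rule int_path_rtrancl[of c c' g]) (use that(2) adj W in \<open>auto simp: adj_within_def\<close>)
  from this[of b b'] this[of b' b] show ?thesis
    by (cases "b \<le> b'") (auto intro: adj_within_rtrancl_sym)
qed

lemma vertical_path:
  assumes "\<And>t. min b b' \<le> t \<Longrightarrow> t \<le> max b b' \<Longrightarrow> (a, t) \<in> W"
  shows "((a, b), (a, b')) \<in> (adj_within W)\<^sup>*"
  using segment_path[of "\<lambda>t. (a, t)"] assms by (simp add: lattice_adj_def)

lemma horizontal_path:
  assumes "\<And>t. min b b' \<le> t \<Longrightarrow> t \<le> max b b' \<Longrightarrow> (t, a) \<in> W"
  shows "((b, a), (b', a)) \<in> (adj_within W)\<^sup>*"
  using segment_path[of "\<lambda>t. (t, a)"] assms by (simp add: lattice_adj_def)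

definition box_outside_square :: "nat \<Rightarrow> nat \<Rightarrow> int \<times> int \<Rightarrow> int \<Rightarrow> (int \<times> int) set" where
  "box_outside_square n m z L = {v \<in> box n m. \<not> (\<bar>fst v - fst z\<bar> \<le> L \<and> \<bar>snd v - snd z\<bar> \<le> L)}"

lemma exists_far_coordinate:
  assumes "\<bar>c\<bar> \<le> int N" "L < int N"
  obtains c' where "\<bar>c'\<bar> \<le> int N" "L < \<bar>c' - c\<bar>"
proof (cases "L < 0")
  case True
  then show thesis using assms by (intro that[of c]) auto
next
  case False
  then show thesis using assms
    by (cases "c + L + 1 \<le> int N") (auto intro: that[of "c + L + 1"] that[of "c - L - 1"])
qed

lemma path_to_far_point:
  assumes v: "v \<in> box_outside_square n m z L"
    and c: "\<bar>c\<bar> \<le> int n" "L < \<bar>c - fst z\<bar>" and r: "\<bar>r\<bar> \<le> int m" "L < \<bar>r - snd z\<bar>"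
  shows "(v, (c, r)) \<in> (adj_within (box_outside_square n m z L))\<^sup>*"
proof -
  obtain v1 v2 where vv: "v = (v1, v2)" by fastforce
  have vb: "\<bar>v1\<bar> \<le> int n" "\<bar>v2\<bar> \<le> int m" using v by (auto simp: box_outside_square_def box_def vv)
  show ?thesis
  proof (cases "L < \<bar>v1 - fst z\<bar>")
    case True
    have "((v1, v2), (v1, r)) \<in> (adj_within (box_outside_square n m z L))\<^sup>*"
      using True vb r by (intro vertical_path) (auto simp: box_outside_square_def box_def)
    moreover have "((v1, r), (c, r)) \<in> (adj_within (box_outside_square n m z L))\<^sup>*"
      using vb r c by (intro horizontal_path) (auto simp: box_outside_square_def box_def)
    ultimately show ?thesis unfolding vv by (rule rtrancl_trans)
  next
    case False
    then have far: "L < \<bar>v2 - snd z\<bar>" using v by (auto simp: box_outside_square_def vv)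
    have "((v1, v2), (c, v2)) \<in> (adj_within (box_outside_square n m z L))\<^sup>*"
      using far vb c by (intro horizontal_path) (auto simp: box_outside_square_def box_def)
    moreover have "((c, v2), (c, r)) \<in> (adj_within (box_outside_square n m z L))\<^sup>*"
      using vb r c by (intro vertical_path) (auto simp: box_outside_square_def box_def)
    ultimately show ?thesis unfolding vv by (rule rtrancl_trans)
  qed
qed

lemma box_outside_square_connected:
  assumes z: "z \<in> box n m" and L: "L < int m" "m \<le> n"
    and x: "x \<in> box_outside_square n m z L" and y: "y \<in> box_outside_square n m z L"
  shows "(x, y) \<in> (adj_within (box_outside_square n m z L))\<^sup>*"
proof -
  have "\<bar>fst z\<bar> \<le> int n" "L < int n" "\<bar>snd z\<bar> \<le> int m" "L < int m"
    using z L by (auto simp: box_def)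
  obtain c where c: "\<bar>c\<bar> \<le> int n" "L < \<bar>c - fst z\<bar>"
    using \<open>\<bar>fst z\<bar> \<le> int n\<close> \<open>L < int n\<close> by (rule exists_far_coordinate)
  obtain r where r: "\<bar>r\<bar> \<le> int m" "L < \<bar>r - snd z\<bar>"
    using \<open>\<bar>snd z\<bar> \<le> int m\<close> \<open>L < int m\<close> by (rule exists_far_coordinate)
  show ?thesis
    using path_to_far_point[OF x c r] path_to_far_point[OF y c r]
    by (meson adj_within_rtrancl_sym rtrancl_trans)
qed

lemma box_connected:
  assumes "x \<in> box n m" "y \<in> box n m" "m \<le> n"
  shows "(x, y) \<in> (adj_within (box n m))\<^sup>*"
proof -
  have "box_outside_square n m (0, 0) (-1) = box n m" by (auto simp: box_outside_square_def)
  moreover have "(0, 0) \<in> box n m" by (simp add: box_def)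
  ultimately show ?thesis using box_outside_square_connected[of "(0, 0)" n m "-1" x y] assms by auto
qed

lemma rtrancl_invariant:
  assumes "(u, v) \<in> r\<^sup>*" and "\<And>a b. (a, b) \<in> r \<Longrightarrow> f a = f b"
  shows "f u = f v"
  using assms by (induction rule: rtrancl_induct) auto

lemma constant_along_adj_within:
  assumes "W \<subseteq> box n m"
    and "\<And>e. e \<in> box_edge_codes n m \<Longrightarrow> fst e \<in> W \<Longrightarrow> far_end e \<in> W \<Longrightarrow> f (fst e) = f (far_end e)"
    and "(u, v) \<in> (adj_within W)\<^sup>*"
  shows "f u = f v"
proof (rule rtrancl_invariant[OF assms(3)])
  fix a b assume ab: "(a, b) \<in> adj_within W"
  then have "lattice_adj a b" by (simp add: adj_within_def)
  then obtain e where e: "fst e = a \<and> far_end e = b \<or> fst e = b \<and> far_end e = a"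
    by (rule lattice_adj_edge_code)
  with ab assms(1) have "e \<in> box_edge_codes n m" "fst e \<in> W" "far_end e \<in> W"
    by (auto simp: adj_within_def box_edge_codes_def)
  then have "f (fst e) = f (far_end e)" by (rule assms(2))
  with e show "f a = f b" by auto
qed

section \<open>Potentials of edge sets with even faces\<close>

fun odd_in :: "'a set \<Rightarrow> 'a list \<Rightarrow> bool" where
  "odd_in C [] = False"
| "odd_in C (e # es) = ((e \<in> C) \<noteq> odd_in C es)"

lemma odd_in_append: "odd_in C (xs @ ys) = (odd_in C xs \<noteq> odd_in C ys)"
  by (induction xs) auto

lemma odd_in_empty: "odd_in {} xs = False"
  by (induction xs) auto

lemma odd_in_split: "C \<subseteq> D \<Longrightarrow> odd_in D xs = (odd_in C xs \<noteq> odd_in (D - C) xs)"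
  by (induction xs) auto

definition canonical_path :: "nat \<Rightarrow> nat \<Rightarrow> int \<times> int \<Rightarrow> edge list" where
  "canonical_path n m v = map (\<lambda>a. ((a, - int m), True)) [- int n..fst v - 1]
                        @ map (\<lambda>b. ((fst v, b), False)) [- int m..snd v - 1]"

definition potential :: "nat \<Rightarrow> nat \<Rightarrow> edge set \<Rightarrow> int \<times> int \<Rightarrow> bool" where
  "potential n m C v = odd_in C (canonical_path n m v)"

text \<open>The four edges of the unit face with lower-left corner \<open>f\<close> are its bottom, top, left and
  right side; the face is even when an even number of them lies in \<open>C\<close>.\<close>
definition even_face :: "edge set \<Rightarrow> int \<times> int \<Rightarrow> bool" where
  "even_face C f \<longleftrightarrow> (((f, True) \<in> C) = (((fst f, snd f + 1), True) \<in> C))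
      = (((f, False) \<in> C) = (((fst f + 1, snd f), False) \<in> C))"

definition faces_even :: "nat \<Rightarrow> nat \<Rightarrow> edge set \<Rightarrow> bool" where
  "faces_even n m C \<longleftrightarrow>
     (\<forall>a b. - int n \<le> a \<longrightarrow> a < int n \<longrightarrow> - int m \<le> b \<longrightarrow> b < int m \<longrightarrow> even_face C (a, b))"

lemma potential_empty: "potential n m {} v = False"
  by (simp add: potential_def odd_in_empty)

lemma potential_split:
  "C \<subseteq> D \<Longrightarrow> potential n m D v = (potential n m C v \<noteq> potential n m (D - C) v)"
  unfolding potential_def by (rule odd_in_split)

lemma potential_step_up:
  assumes "- int m \<le> j"
  shows "potential n m C (i, j + 1) = (potential n m C (i, j) \<noteq> (((i, j), False) \<in> C))"
proof -
  have "[- int m..j] = [- int m..j - 1] @ [j]" using assms by (rule upto_rec2)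
  then show ?thesis by (simp add: potential_def canonical_path_def odd_in_append) blast
qed

lemma potential_step_right_bottom:
  assumes "- int n \<le> i"
  shows "potential n m C (i + 1, - int m)
    = (potential n m C (i, - int m) \<noteq> (((i, - int m), True) \<in> C))"
proof -
  have "[- int n..i] = [- int n..i - 1] @ [i]" using assms by (rule upto_rec2)
  then show ?thesis by (simp add: potential_def canonical_path_def odd_in_append)
qed

lemma potential_step_right:
  assumes even: "faces_even n m C"
    and i: "- int n \<le> i" "i < int n" and j: "- int m \<le> j" "j \<le> int m"
  shows "potential n m C (i + 1, j) = (potential n m C (i, j) \<noteq> (((i, j), True) \<in> C))"
  using j
proof (induction j rule: int_ge_induct)
  case base
  show ?case using i(1) by (rule potential_step_right_bottom)
next
  case (step j)
  then have "even_face C (i, j)" using even i by (simp add: faces_even_def)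
  with step potential_step_up[OF step(1), of n C i] potential_step_up[OF step(1), of n C "i + 1"]
  show ?case by (auto simp: even_face_def)
qed

lemma potential_jump:
  assumes "faces_even n m C" "e \<in> box_edge_codes n m"
  shows "(potential n m C (fst e) \<noteq> potential n m C (far_end e)) = (e \<in> C)"
proof -
  obtain i j b where e: "e = ((i, j), b)" by (metis prod.collapse)
  show ?thesis
  proof (cases b)
    case True
    then have "- int n \<le> i" "i < int n" "- int m \<le> j" "j \<le> int m"
      using assms(2) by (auto simp: box_edge_codes_def box_def far_end_def e)
    then show ?thesis using potential_step_right[OF assms(1)] True
      by (auto simp: e far_end_def)
  next
    case False
    then have "- int m \<le> j"
      using assms(2) by (auto simp: box_edge_codes_def box_def far_end_def e)
    then show ?thesis using potential_step_up[of m j n C i] False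
      by (auto simp: e far_end_def)
  qed
qed

section \<open>Star-connected edge sets\<close>

definition star_adj :: "edge \<Rightarrow> edge \<Rightarrow> bool" where
  "star_adj e e' \<longleftrightarrow> \<bar>fst (fst e) - fst (fst e')\<bar> \<le> 1 \<and> \<bar>snd (fst e) - snd (fst e')\<bar> \<le> 1"

lemma star_adj_sym: "star_adj e e' = star_adj e' e"
  by (auto simp: star_adj_def abs_minus_commute)

definition star_rel :: "edge set \<Rightarrow> (edge \<times> edge) set" where
  "star_rel D = {(a, b). a \<in> D \<and> b \<in> D \<and> star_adj a b}"

definition star_connected :: "edge set \<Rightarrow> bool" where
  "star_connected C \<longleftrightarrow> (\<exists>e0\<in>C. \<forall>e\<in>C. (e0, e) \<in> (star_rel C)\<^sup>*)"

definition star_component :: "edge set \<Rightarrow> edge \<Rightarrow> edge set" where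
  "star_component D e0 = {e \<in> D. (e0, e) \<in> (star_rel D)\<^sup>*}"

lemma star_component_subset: "star_component D e0 \<subseteq> D"
  by (auto simp: star_component_def)

lemma star_component_closed:
  assumes "c \<in> star_component D e0" "c' \<in> D" "star_adj c c'"
  shows "c' \<in> star_component D e0"
  using assms by (auto simp: star_component_def star_rel_def intro: rtrancl_into_rtrancl)

lemma star_connected_star_component:
  assumes "e0 \<in> D"
  shows "star_connected (star_component D e0)"
proof -
  have "(e0, e) \<in> (star_rel (star_component D e0))\<^sup>*" if "(e0, e) \<in> (star_rel D)\<^sup>*" for e
    using that
  proof (induction rule: rtrancl_induct)
    case (step b c)
    then have "(b, c) \<in> star_rel (star_component D e0)"
      by (auto simp: star_rel_def star_component_def intro: rtrancl_into_rtrancl)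
    with step.IH show ?case by (rule rtrancl_into_rtrancl)
  qed simp
  moreover have "e0 \<in> star_component D e0" using assms by (simp add: star_component_def)
  ultimately show ?thesis
    unfolding star_connected_def by (intro bexI[of _ e0]) (auto simp: star_component_def)
qed

text \<open>The four edges of a face have pairwise \<open>star_adj\<close> base points, so they lie all
  inside or all outside any \<open>star_adj\<close>-closed part \<open>C\<close> of \<open>D\<close>.\<close>
lemma even_face_closed_subset:
  assumes "even_face D f" "C \<subseteq> D"
    and closed: "\<And>c c'. c \<in> C \<Longrightarrow> c' \<in> D \<Longrightarrow> star_adj c c' \<Longrightarrow> c' \<in> C"
  shows "even_face C f"
proof -
  obtain a b where f: "f = (a, b)" by fastforce
  define F where "F = {((a, b), True), ((a, b + 1), True), ((a, b), False), ((a + 1, b), False)}"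
  have adj: "star_adj c c'" if "c \<in> F" "c' \<in> F" for c c'
    using that by (auto simp: star_adj_def F_def)
  obtain Q where Q: "\<And>c. c \<in> F \<Longrightarrow> c \<in> C \<longleftrightarrow> c \<in> D \<and> Q"
  proof (cases "F \<inter> C = {}")
    case True
    then show thesis by (intro that[of False]) blast
  next
    case False
    then obtain c where "c \<in> F" "c \<in> C" by blast
    then show thesis using closed adj assms(2) by (intro that[of True]) blast
  qed
  have "((a, b), True) \<in> C \<longleftrightarrow> ((a, b), True) \<in> D \<and> Q"
    "((a, b + 1), True) \<in> C \<longleftrightarrow> ((a, b + 1), True) \<in> D \<and> Q"
    "((a, b), False) \<in> C \<longleftrightarrow> ((a, b), False) \<in> D \<and> Q"
    "((a + 1, b), False) \<in> C \<longleftrightarrow> ((a + 1, b), False) \<in> D \<and> Q"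
    by (simp_all add: Q F_def)
  with assms(1) show ?thesis by (cases Q) (simp_all add: even_face_def f)
qed

lemma faces_even_star_component:
  assumes "faces_even n m D"
  shows "faces_even n m (star_component D e0)"
  using assms even_face_closed_subset[OF _ star_component_subset star_component_closed]
  by (simp add: faces_even_def)

lemma even_face_diff:
  assumes "even_face D f" "even_face C f" "C \<subseteq> D"
  shows "even_face (D - C) f"
  using assms(1,2) subsetD[OF assms(3), of "(f, True)"] subsetD[OF assms(3), of "(f, False)"]
    subsetD[OF assms(3), of "((fst f, snd f + 1), True)"]
    subsetD[OF assms(3), of "((fst f + 1, snd f), False)"]
  unfolding even_face_def Diff_iff by argo

lemma faces_even_diff:
  assumes "faces_even n m D" "faces_even n m C" "C \<subseteq> D"
  shows "faces_even n m (D - C)"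
  using assms unfolding faces_even_def by (blast intro: even_face_diff)

text \<open>Removing the \<open>star_adj\<close>-components of \<open>D\<close> one at a time preserves even faces, and the
  potentials of the pieces add up modulo 2, so one of the components must separate.\<close>
lemma separating_star_component:
  assumes "finite D" "faces_even n m D" "potential n m D x \<noteq> potential n m D y"
  shows "\<exists>C\<subseteq>D. star_connected C \<and> faces_even n m C \<and> potential n m C x \<noteq> potential n m C y"
  using assms
proof (induction "card D" arbitrary: D rule: less_induct)
  case less
  have "D \<noteq> {}" using less.prems(3) by (auto simp: potential_empty)
  then obtain e0 where e0: "e0 \<in> D" by blast
  define C where "C = star_component D e0"
  have CD: "C \<subseteq> D" by (simp add: C_def star_component_subset)
  have even: "faces_even n m C"
    using less.prems(2) by (simp add: C_def faces_even_star_component)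
  have even_rest: "faces_even n m (D - C)"
    using less.prems(2) even CD by (rule faces_even_diff)
  show ?case
  proof (cases "potential n m C x \<noteq> potential n m C y")
    case True
    then show ?thesis using star_connected_star_component[OF e0] even CD unfolding C_def by blast
  next
    case False
    then have "potential n m (D - C) x \<noteq> potential n m (D - C) y"
      using less.prems(3) potential_split[OF CD] by auto
    moreover have "card (D - C) < card D"
      using less.prems(1) e0 by (intro psubset_card_mono) (auto simp: C_def star_component_def)
    ultimately have "\<exists>C'\<subseteq>D - C. star_connected C' \<and> faces_even n m C'
        \<and> potential n m C' x \<noteq> potential n m C' y"
      using less.prems(1) even_rest by (intro less.hyps) auto
    then show ?thesis by blast
  qed
qed

section \<open>Covering walks\<close>

lemma rtrancl_exits:
  assumes "(a, b) \<in> r\<^sup>*" "a \<in> T" "b \<notin> T"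
  shows "\<exists>u v. u \<in> T \<and> v \<notin> T \<and> (u, v) \<in> r"
  using assms by (induction rule: rtrancl_induct) auto

lemma successively_detour:
  assumes "successively R (xs @ u # ys)" "R u v" "R v u"
  shows "successively R (xs @ u # v # u # ys)"
  using assms by (auto simp: successively_append_iff successively_Cons)

lemma star_walk_extend:
  assumes conn: "\<forall>e\<in>C. (e0, e) \<in> (star_rel C)\<^sup>*"
    and w: "w \<noteq> []" "hd w = e0" "set w \<subset> C" "successively star_adj w"
  obtains w' where "w' \<noteq> []" "hd w' = e0" "set w' \<subseteq> C" "card (set w') = Suc (card (set w))"
    "successively star_adj w'" "length w' = length w + 2"
proof -
  obtain e where e: "e \<in> C" "e \<notin> set w" using w(3) by blast
  have "e0 \<in> set w" using w(1,2) by (metis list.set_sel(1))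
  then obtain u v where uv: "u \<in> set w" "v \<notin> set w" "(u, v) \<in> star_rel C"
    using rtrancl_exits[OF conn[rule_format, OF e(1)] _ e(2)] by blast
  then have v: "v \<in> C" "star_adj u v" by (auto simp: star_rel_def)
  then have "star_adj v u" by (simp add: star_adj_sym)
  obtain w1 w2 where w12: "w = w1 @ u # w2" using uv(1) by (metis split_list)
  show thesis
  proof (rule that[of "w1 @ u # v # u # w2"])
    show "hd (w1 @ u # v # u # w2) = e0" using w(2) by (cases w1) (auto simp: w12)
    show "successively star_adj (w1 @ u # v # u # w2)"
      using w(4) v(2) \<open>star_adj v u\<close> unfolding w12 by (rule successively_detour)
    have set_w': "set (w1 @ u # v # u # w2) = insert v (set w)" by (auto simp: w12)
    then show "set (w1 @ u # v # u # w2) \<subseteq> C" using w(3) v(1) by auto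
    show "card (set (w1 @ u # v # u # w2)) = Suc (card (set w))"
      unfolding set_w' using uv(2) by simp
  qed (auto simp: w12)
qed

text \<open>Walking to each new edge of \<open>C\<close> and back costs two steps, hence the length bound.\<close>
lemma covering_star_walk:
  assumes fin: "finite C" and e0: "e0 \<in> C" and conn: "\<forall>e\<in>C. (e0, e) \<in> (star_rel C)\<^sup>*"
  obtains w where "w \<noteq> []" "hd w = e0" "set w = C" "successively star_adj w"
    "length w + 1 \<le> 2 * card C"
proof -
  have grow: "\<exists>w. w \<noteq> [] \<and> hd w = e0 \<and> set w \<subseteq> C \<and> card (set w) = Suc k
      \<and> successively star_adj w \<and> length w + 1 \<le> 2 * Suc k" if "Suc k \<le> card C" for k
    using that
  proof (induction k)
    case 0
    show ?case using e0 by (intro exI[of _ "[e0]"]) auto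
  next
    case (Suc k)
    then obtain w where w: "w \<noteq> []" "hd w = e0" "set w \<subseteq> C" "card (set w) = Suc k"
      "successively star_adj w" "length w + 1 \<le> 2 * Suc k" by auto
    have "set w \<subset> C" using w(3,4) Suc.prems by auto
    obtain w' where "w' \<noteq> []" "hd w' = e0" "set w' \<subseteq> C"
      "card (set w') = Suc (card (set w))" "successively star_adj w'" "length w' = length w + 2"
      using conn w(1,2) \<open>set w \<subset> C\<close> w(5) by (rule star_walk_extend)
    then show ?case using w(4,6) by (intro exI[of _ w']) simp
  qed
  have "0 < card C" using fin e0 card_gt_0_iff by blast
  then obtain w where w: "w \<noteq> []" "hd w = e0" "set w \<subseteq> C" "card (set w) = card C"
    "successively star_adj w" "length w + 1 \<le> 2 * card C"
    using grow[of "card C - 1"] by auto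
  have "set w = C" by (rule card_subset_eq[OF fin w(3,4)])
  with w(1,2,5,6) show thesis by (intro that) simp_all
qed

definition sup_dist :: "int \<times> int \<Rightarrow> int \<times> int \<Rightarrow> nat" where
  "sup_dist a z = nat (max \<bar>fst a - fst z\<bar> \<bar>snd a - snd z\<bar>)"

lemma sup_dist_le_iff: "sup_dist a z \<le> L \<longleftrightarrow> \<bar>fst a - fst z\<bar> \<le> int L \<and> \<bar>snd a - snd z\<bar> \<le> int L"
  by (auto simp: sup_dist_def)

lemma star_walk_near_hd:
  assumes "successively star_adj w" "e \<in> set w"
  shows "sup_dist (fst e) (fst (hd w)) < length w"
  using assms
proof (induction w)
  case (Cons e1 ws)
  show ?case
  proof (cases "e = e1")
    case False
    then have "ws \<noteq> []" "sup_dist (fst e) (fst (hd ws)) < length ws" "star_adj e1 (hd ws)"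
      using Cons by (auto simp: successively_Cons)
    then show ?thesis by (simp add: sup_dist_def star_adj_def nat_less_iff) arith
  qed (simp add: sup_dist_def)
qed simp

section \<open>Closed separating circuits\<close>

definition edge_boundary :: "nat \<Rightarrow> nat \<Rightarrow> (int \<times> int) set \<Rightarrow> edge set" where
  "edge_boundary n m A = {e \<in> box_edge_codes n m. (fst e \<in> A) \<noteq> (far_end e \<in> A)}"

lemma faces_even_edge_boundary: "faces_even n m (edge_boundary n m A)"
  unfolding faces_even_def
proof (intro allI impI)
  fix a b assume "- int n \<le> a" "a < int n" "- int m \<le> b" "b < int m"
  then have "((a, b), True) \<in> box_edge_codes n m" "((a, b + 1), True) \<in> box_edge_codes n m"
    "((a, b), False) \<in> box_edge_codes n m" "((a + 1, b), False) \<in> box_edge_codes n m"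
    by (auto simp: box_edge_codes_def box_def far_end_def)
  then show "even_face (edge_boundary n m A) (a, b)"
    by (auto simp: even_face_def edge_boundary_def far_end_def)
qed

lemma potential_edge_boundary:
  assumes "x \<in> box n m" "y \<in> box n m" "m \<le> n"
  shows "(potential n m (edge_boundary n m A) x \<noteq> (x \<in> A))
       = (potential n m (edge_boundary n m A) y \<noteq> (y \<in> A))"
proof (rule constant_along_adj_within[OF order_refl])
  fix e assume e: "e \<in> box_edge_codes n m"
  have "(potential n m (edge_boundary n m A) (fst e) \<noteq> potential n m (edge_boundary n m A) (far_end e))
      = (e \<in> edge_boundary n m A)"
    using faces_even_edge_boundary e by (rule potential_jump)
  moreover have "e \<in> edge_boundary n m A \<longleftrightarrow> (fst e \<in> A) \<noteq> (far_end e \<in> A)"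
    using e by (simp add: edge_boundary_def)
  ultimately show "(potential n m (edge_boundary n m A) (fst e) \<noteq> (fst e \<in> A))
      = (potential n m (edge_boundary n m A) (far_end e) \<noteq> (far_end e \<in> A))"
    by blast
next
  show "(x, y) \<in> (adj_within (box n m))\<^sup>*" using assms by (rule box_connected)
qed

lemma edge_boundary_cluster_closed:
  assumes "e \<in> edge_boundary n m {v. joined S x v}"
  shows "edge_set e \<notin> S"
proof
  assume "edge_set e \<in> S"
  then have "(fst e, far_end e) \<in> {(u, v). {u, v} \<in> S}" "(far_end e, fst e) \<in> {(u, v). {u, v} \<in> S}"
    by (auto simp: edge_set_def insert_commute)
  with assms show False
    by (auto simp: edge_boundary_def joined_def intro: rtrancl_into_rtrancl)
qed

text \<open>Outside the square of radius \<open>L\<close> around \<open>z\<close> containing all edges of \<open>C\<close> the potential of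
  \<open>C\<close> is constant, and this region is connected unless \<open>L \<ge> m\<close>.\<close>
lemma separator_near_endpoint:
  assumes even: "faces_even n m C" and sep: "potential n m C x \<noteq> potential n m C y"
    and xy: "x \<in> box n m" "y \<in> box n m" "m \<le> n" and z: "z \<in> box n m"
    and C: "\<And>e. e \<in> C \<Longrightarrow> sup_dist (fst e) z \<le> L"
  shows "min (min (sup_dist x z) (sup_dist y z)) m \<le> L"
proof (rule ccontr)
  assume "\<not> ?thesis"
  then have far: "L < sup_dist x z" "L < sup_dist y z" and "int L < int m" by auto
  let ?W = "box_outside_square n m z (int L)"
  have "x \<in> ?W" "y \<in> ?W" using far xy by (auto simp: box_outside_square_def sup_dist_le_iff[symmetric])
  then have path: "(x, y) \<in> (adj_within ?W)\<^sup>*"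
    using box_outside_square_connected[OF z \<open>int L < int m\<close> xy(3)] by blast
  have "potential n m C x = potential n m C y"
  proof (rule constant_along_adj_within[OF _ _ path])
    show "?W \<subseteq> box n m" by (auto simp: box_outside_square_def)
  next
    fix e assume e: "e \<in> box_edge_codes n m" "fst e \<in> ?W"
    then have "L < sup_dist (fst e) z"
      by (auto simp: box_outside_square_def sup_dist_le_iff[symmetric])
    then have "e \<notin> C" using C[of e] by linarith
    then show "potential n m C (fst e) = potential n m C (far_end e)"
      using potential_jump[OF even e(1)] by simp
  qed
  with sep show False ..
qed

definition certificate :: "nat \<Rightarrow> nat \<Rightarrow> int \<times> int \<Rightarrow> int \<times> int \<Rightarrow> edge list \<Rightarrow> bool" where
  "certificate n m x y w \<longleftrightarrow> w \<noteq> [] \<and> set w \<subseteq> box_edge_codes n m \<and> successively star_adj w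
     \<and> length w + 1 \<le> 2 * card (set w)
     \<and> min (min (sup_dist x (fst (hd w))) (sup_dist y (fst (hd w)))) m \<le> length w"

lemma closed_certificate_exists:
  assumes xy: "x \<in> box n m" "y \<in> box n m" "m \<le> n" and "\<not> joined S x y"
  obtains w where "certificate n m x y w" "\<forall>e\<in>set w. edge_set e \<notin> S"
proof -
  define A where "A = {v. joined S x v}"
  define D where "D = edge_boundary n m A"
  have "x \<in> A" "y \<notin> A" using \<open>\<not> joined S x y\<close> by (simp_all add: A_def joined_def)
  then have "potential n m D x \<noteq> potential n m D y"
    using potential_edge_boundary[OF xy, of A] unfolding D_def by blast
  moreover have "finite D"
    unfolding D_def edge_boundary_def by (rule finite_subset[OF _ finite_box_edge_codes]) blast
  moreover have "faces_even n m D" unfolding D_def by (rule faces_even_edge_boundary)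
  ultimately obtain C where C: "C \<subseteq> D" "star_connected C" "faces_even n m C"
    "potential n m C x \<noteq> potential n m C y"
    using separating_star_component[of D n m x y] by blast
  from C(2) obtain e0 where e0: "e0 \<in> C" "\<forall>e\<in>C. (e0, e) \<in> (star_rel C)\<^sup>*"
    unfolding star_connected_def by blast
  have "finite C" using \<open>finite D\<close> C(1) finite_subset by blast
  then obtain w where w: "w \<noteq> []" "hd w = e0" "set w = C" "successively star_adj w"
    "length w + 1 \<le> 2 * card C"
    using e0 by (rule covering_star_walk)
  have CD: "C \<subseteq> box_edge_codes n m" using C(1) by (auto simp: D_def edge_boundary_def)
  then have "fst e0 \<in> box n m" using e0(1) by (auto simp: box_edge_codes_def)
  moreover have "sup_dist (fst e) (fst e0) \<le> length w" if "e \<in> C" for e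
    using star_walk_near_hd[OF w(4), of e] that w(2,3) by simp
  ultimately have "min (min (sup_dist x (fst e0)) (sup_dist y (fst e0))) m \<le> length w"
    using C(3,4) xy by (intro separator_near_endpoint)
  then have "certificate n m x y w" using w CD by (simp add: certificate_def)
  moreover have "\<forall>e\<in>set w. edge_set e \<notin> S"
    using w(3) C(1) edge_boundary_cluster_closed unfolding D_def A_def by blast
  ultimately show thesis by (rule that)
qed

section \<open>Counting star-walks\<close>

definition star_walks :: "edge \<Rightarrow> nat \<Rightarrow> edge list set" where
  "star_walks e0 L = {w. length w = L \<and> w \<noteq> [] \<and> hd w = e0 \<and> successively star_adj w}"

definition star_steps :: "edge set" where
  "star_steps = ({-1, 0, 1} \<times> {-1, 0, 1}) \<times> UNIV"

definition shift :: "edge \<Rightarrow> edge \<Rightarrow> edge" where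
  "shift e d = ((fst (fst e) + fst (fst d), snd (fst e) + snd (fst d)), snd d)"

lemma card_star_steps: "card star_steps = 18"
  by (simp add: star_steps_def card_cartesian_product)

lemma finite_star_steps: "finite star_steps"
  by (simp add: star_steps_def)

lemma star_adj_eq_shift:
  assumes "star_adj e e'"
  obtains d where "d \<in> star_steps" "e' = shift e d"
proof -
  have unit: "c \<in> {-1, 0, 1}" if "\<bar>c\<bar> \<le> 1" for c :: int using that by auto
  define d where "d = ((fst (fst e') - fst (fst e), snd (fst e') - snd (fst e)), snd e')"
  have "fst (fst e') - fst (fst e) \<in> {-1, 0, 1}" "snd (fst e') - snd (fst e) \<in> {-1, 0, 1}"
    using assms by (auto simp: star_adj_def abs_minus_commute intro!: unit)
  then have "d \<in> star_steps"
    unfolding star_steps_def d_def by (simp only: mem_Times_iff fst_conv snd_conv UNIV_I simp_thms)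
  moreover have "e' = shift e d" by (simp add: shift_def d_def)
  ultimately show thesis by (rule that)
qed

lemma star_walks_Suc_subset:
  "star_walks e0 (Suc (Suc k)) \<subseteq> (\<lambda>(w, d). w @ [shift (last w) d]) ` (star_walks e0 (Suc k) \<times> star_steps)"
proof
  fix w' assume w': "w' \<in> star_walks e0 (Suc (Suc k))"
  define w where "w = butlast w'"
  have split: "w' = w @ [last w']" using w' by (simp add: w_def star_walks_def)
  have "length w = Suc k" using w' by (simp add: star_walks_def w_def)
  then have "w \<noteq> []" by auto
  have "successively star_adj (w @ [last w'])" "hd (w @ [last w']) = e0"
    using w' split[symmetric] by (auto simp: star_walks_def)
  then have "hd w = e0" "successively star_adj w" "star_adj (last w) (last w')"
    using \<open>w \<noteq> []\<close> by (auto simp: successively_append_iff)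
  then obtain d where "d \<in> star_steps" "last w' = shift (last w) d" by (blast elim: star_adj_eq_shift)
  moreover have "w \<in> star_walks e0 (Suc k)"
    using \<open>length w = Suc k\<close> \<open>w \<noteq> []\<close> \<open>hd w = e0\<close> \<open>successively star_adj w\<close>
    by (simp add: star_walks_def)
  ultimately show "w' \<in> (\<lambda>(w, d). w @ [shift (last w) d]) ` (star_walks e0 (Suc k) \<times> star_steps)"
    using split by (intro image_eqI[of _ _ "(w, d)"]) auto
qed

lemma star_walks_card_le: "finite (star_walks e0 (Suc k)) \<and> card (star_walks e0 (Suc k)) \<le> 18 ^ k"
proof (induction k)
  case 0
  have "star_walks e0 (Suc 0) = {[e0]}"
  proof (intro set_eqI)
    show "w \<in> star_walks e0 (Suc 0) \<longleftrightarrow> w \<in> {[e0]}" for w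
      by (cases w) (auto simp: star_walks_def)
  qed
  then show ?case by simp
next
  case (Suc k)
  let ?F = "(\<lambda>(w, d). w @ [shift (last w) d]) ` (star_walks e0 (Suc k) \<times> star_steps)"
  have fin: "finite ?F" using Suc finite_star_steps by auto
  have "card ?F \<le> card (star_walks e0 (Suc k) \<times> star_steps)" by (rule card_image_le) (use Suc finite_star_steps in auto)
  also have "\<dots> \<le> 18 ^ k * 18" using Suc by (simp add: card_cartesian_product card_star_steps)
  finally have "card ?F \<le> 18 ^ Suc k" by simp
  moreover have "card (star_walks e0 (Suc (Suc k))) \<le> card ?F"
    using star_walks_Suc_subset fin by (rule card_mono[rotated])
  ultimately show ?case using finite_subset[OF star_walks_Suc_subset fin] by simp
qed

lemma finite_star_walks: "finite (star_walks e0 L)"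
proof (cases L)
  case 0
  then show ?thesis by (simp add: star_walks_def)
qed (use star_walks_card_le in blast)

section \<open>Percolation probabilities\<close>

lemma perc_prob_avoid:
  fixes p :: real
  assumes fin: "finite E" and FE: "F \<subseteq> E"
  shows "perc_prob p E (\<lambda>S. S \<inter> F = {}) = (1 - p) ^ card F"
proof -
  define q where "q e = (if e \<in> F then 0 else p)" for e
  have "(1 - p) ^ card F = (\<Prod>e\<in>E. q e + (1 - p))"
  proof -
    have "(\<Prod>e\<in>E. q e + (1 - p)) = (\<Prod>e\<in>E. if e \<in> F then 1 - p else 1)"
      by (rule prod.cong) (auto simp: q_def)
    also have "\<dots> = (1 - p) ^ card F"
      using fin FE by (simp add: prod.If_cases Int_absorb1)
    finally show ?thesis by simp
  qed
  also have "\<dots> = (\<Sum>X\<in>Pow E. (\<Prod>e\<in>X. q e) * (\<Prod>e\<in>E - X. 1 - p))"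
    using fin by (rule prod_add)
  also have "\<dots> = (\<Sum>X\<in>Pow E. if X \<inter> F = {} then p ^ card X * (1 - p) ^ card (E - X) else 0)"
  proof (rule sum.cong[OF refl])
    fix X assume "X \<in> Pow E"
    then have "finite X" using fin finite_subset by auto
    show "(\<Prod>e\<in>X. q e) * (\<Prod>e\<in>E - X. 1 - p)
        = (if X \<inter> F = {} then p ^ card X * (1 - p) ^ card (E - X) else 0)"
    proof (cases "X \<inter> F = {}")
      case True
      then have "(\<Prod>e\<in>X. q e) = (\<Prod>e\<in>X. p)" by (intro prod.cong) (auto simp: q_def)
      with True show ?thesis by simp
    next
      case False
      then have "(\<Prod>e\<in>X. q e) = 0" using \<open>finite X\<close> by (auto simp: q_def prod_zero_iff)
      with False show ?thesis by simp
    qed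
  qed
  also have "\<dots> = perc_prob p E (\<lambda>S. S \<inter> F = {})"
    using fin by (simp add: perc_prob_def sum.If_cases Pow_def Collect_conj_eq[symmetric] Int_def)
  finally show ?thesis ..
qed

lemma perc_prob_compl:
  fixes p :: real
  assumes "finite E"
  shows "perc_prob p E A = 1 - perc_prob p E (\<lambda>S. \<not> A S)"
proof -
  have "perc_prob p E A + perc_prob p E (\<lambda>S. \<not> A S) = perc_prob p E (\<lambda>S. S \<inter> {} = {})"
    unfolding perc_prob_def by (subst sum.union_disjoint[symmetric]) (use assms in \<open>auto intro: sum.cong\<close>)
  also have "\<dots> = 1" using perc_prob_avoid[OF assms, of "{}"] by simp
  finally show ?thesis by simp
qed

lemma sum_union_bound:
  fixes f :: "'a \<Rightarrow> real"
  assumes I: "finite I" and A: "\<And>i. i \<in> I \<Longrightarrow> finite (A i)"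
    and B: "B \<subseteq> (\<Union>i\<in>I. A i)" and f: "\<And>x. 0 \<le> f x"
  shows "sum f B \<le> (\<Sum>i\<in>I. sum f (A i))"
proof -
  have "sum f B \<le> sum f (\<Union>i\<in>I. A i)" using I A B f by (intro sum_mono2) auto
  also have "\<dots> \<le> (\<Sum>i\<in>I. sum f (A i))"
    using I A
  proof (induction I rule: finite_induct)
    case (insert i I)
    have "finite (A i)" "finite (\<Union>j\<in>I. A j)" using insert.prems insert.hyps(1) by auto
    then have "sum f (A i \<union> (\<Union>j\<in>I. A j))
        = sum f (A i) + sum f (\<Union>j\<in>I. A j) - sum f (A i \<inter> (\<Union>j\<in>I. A j))"
      by (rule sum_Un)
    then have "sum f (A i \<union> (\<Union>j\<in>I. A j)) \<le> sum f (A i) + sum f (\<Union>j\<in>I. A j)"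
      using f by (simp add: sum_nonneg)
    with insert show ?case by simp
  qed simp
  finally show ?thesis .
qed

lemma perc_prob_union_bound:
  fixes p :: real
  assumes "finite E" "finite I" "0 \<le> p" "p \<le> 1"
    and cover: "\<And>S. S \<subseteq> E \<Longrightarrow> A S \<Longrightarrow> \<exists>i\<in>I. B i S"
  shows "perc_prob p E A \<le> (\<Sum>i\<in>I. perc_prob p E (B i))"
  unfolding perc_prob_def
proof (rule sum_union_bound)
  show "finite {S. S \<subseteq> E \<and> B i S}" for i using assms(1) by simp
  show "0 \<le> p ^ card S * (1 - p) ^ card (E - S)" for S using assms(3,4) by simp
qed (use assms(2) cover in auto)

section \<open>Numerical estimates\<close>

lemma sum_power_tail_le:
  fixes s :: real
  assumes "0 \<le> s" "s \<le> 1/2"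
  shows "(\<Sum>L=M..N. s ^ L) \<le> 2 * s ^ M"
proof -
  have "(\<Sum>L=M..N. s ^ L) = (if N < M then 0 else (s ^ M - s ^ Suc N) / (1 - s))"
    using assms by (simp add: sum_gp)
  also have "\<dots> \<le> 2 * s ^ M"
  proof (cases "N < M")
    case True then show ?thesis using assms by simp
  next
    case False
    have "(s ^ M - s ^ Suc N) / (1 - s) \<le> s ^ M / (1 - s)"
      using assms by (intro divide_right_mono) auto
    also have "\<dots> \<le> s ^ M / (1/2)" using assms by (intro divide_left_mono) auto
    finally show ?thesis using False by simp
  qed
  finally show ?thesis .
qed

lemma sum_power_inj_le:
  fixes u :: real
  assumes u: "0 \<le> u" "u \<le> 1/2" and B: "finite B" "inj_on g B"
  shows "(\<Sum>a\<in>B. u ^ g a) \<le> 2"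
proof -
  have "(\<Sum>a\<in>B. u ^ g a) = (\<Sum>k\<in>g ` B. u ^ k)" using B by (simp add: sum.reindex)
  also have "\<dots> \<le> (\<Sum>k. u ^ k)" using u B by (intro sum_le_suminf summable_geometric) auto
  also have "\<dots> = 1 / (1 - u)" using u by (intro suminf_geometric) auto
  also have "\<dots> \<le> 2" using u by (simp add: field_simps)
  finally show ?thesis .
qed

lemma sum_power_abs_diff_le:
  fixes u :: real
  assumes u: "0 \<le> u" "u \<le> 1/2" and A: "finite A"
  shows "(\<Sum>a\<in>A. u ^ nat \<bar>a - c\<bar>) \<le> 4"
proof -
  have "(\<Sum>a\<in>A. u ^ nat \<bar>a - c\<bar>)
      = (\<Sum>a\<in>A \<inter> {a. c \<le> a}. u ^ nat \<bar>a - c\<bar>) + (\<Sum>a\<in>A \<inter> - {a. c \<le> a}. u ^ nat \<bar>a - c\<bar>)"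
    using A by (rule sum.Int_Diff[of A _ "{a. c \<le> a}", unfolded Diff_eq])
  also have "(\<Sum>a\<in>A \<inter> {a. c \<le> a}. u ^ nat \<bar>a - c\<bar>) \<le> 2"
    using u A by (intro sum_power_inj_le) (auto simp: inj_on_def)
  also have "(\<Sum>a\<in>A \<inter> - {a. c \<le> a}. u ^ nat \<bar>a - c\<bar>) \<le> 2"
    using u A by (intro sum_power_inj_le) (auto simp: inj_on_def)
  finally show ?thesis by simp
qed

lemma power_le_power_of_le_square:
  fixes Q r :: real
  assumes "0 \<le> Q" "Q \<le> r ^ 2" "0 \<le> r" "r \<le> 1" "l \<le> 2 * c"
  shows "Q ^ c \<le> r ^ l"
proof -
  have "Q ^ c \<le> (r ^ 2) ^ c" using assms by (intro power_mono) auto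
  also have "\<dots> = r ^ (2 * c)" by (simp add: power_mult)
  also have "\<dots> \<le> r ^ l" using assms by (intro power_decreasing) auto
  finally show ?thesis .
qed

lemma sum_star_walks_le:
  fixes s :: real
  assumes s: "0 \<le> s" "s \<le> 1/2" and M: "1 \<le> M"
  shows "(\<Sum>L\<in>{M..N}. \<Sum>w\<in>star_walks e0 L. (s / 18) ^ length w) \<le> s ^ M / 9"
proof -
  have "(\<Sum>L\<in>{M..N}. \<Sum>w\<in>star_walks e0 L. (s / 18) ^ length w) \<le> (\<Sum>L\<in>{M..N}. s ^ L / 18)"
  proof (rule sum_mono)
    fix L assume L: "L \<in> {M..N}"
    then obtain k where k: "L = Suc k" using M by (metis Suc_pred atLeastAtMost_iff le_zero_eq not_gr_zero not_one_le_zero)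
    have "(\<Sum>w\<in>star_walks e0 L. (s / 18) ^ length w) = (\<Sum>w\<in>star_walks e0 L. (s / 18) ^ L)"
      by (rule sum.cong) (auto simp: star_walks_def)
    also have "\<dots> = real (card (star_walks e0 L)) * (s / 18) ^ L" by simp
    also have "\<dots> \<le> 18 ^ k * (s / 18) ^ L"
      using star_walks_card_le[of e0 k] k s by (intro mult_right_mono) auto
    also have "\<dots> = s ^ L / 18" using k by (simp add: power_divide)
    finally show "(\<Sum>w\<in>star_walks e0 L. (s / 18) ^ length w) \<le> s ^ L / 18" .
  qed
  also have "\<dots> = (\<Sum>L=M..N. s ^ L) / 18" by (simp add: sum_divide_distrib)
  also have "\<dots> \<le> (2 * s ^ M) / 18" using sum_power_tail_le[OF s] by (intro divide_right_mono) auto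
  finally show ?thesis by simp
qed

lemma power_max_min_le:
  fixes t :: real
  assumes "0 \<le> t" "t \<le> 1"
  shows "(t ^ 2) ^ max 1 (min (min a b) c) \<le> t * (t ^ a + t ^ b + t ^ c)"
proof -
  let ?k = "min (min a b) c"
  have "(t ^ 2) ^ max 1 ?k = t ^ (2 * max 1 ?k)" by (simp add: power_mult)
  also have "\<dots> \<le> t ^ (Suc ?k)" using assms by (intro power_decreasing) auto
  also have "\<dots> = t * t ^ ?k" by simp
  also have "t ^ ?k \<le> t ^ a + t ^ b + t ^ c"
  proof -
    have "?k = a \<or> ?k = b \<or> ?k = c" by linarith
    then show ?thesis using assms by (auto simp: add_nonneg_nonneg)
  qed
  then have "t * t ^ ?k \<le> t * (t ^ a + t ^ b + t ^ c)" using assms by (intro mult_left_mono) auto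
  finally show ?thesis .
qed

lemma sum_box_power_sup_dist_le:
  fixes t :: real
  assumes t: "0 \<le> t" "t \<le> 1/4"
  shows "(\<Sum>v\<in>box n m. t ^ sup_dist x v) \<le> 16"
proof -
  define u where "u = sqrt t"
  have u0: "0 \<le> u" using t(1) by (simp add: u_def)
  have u2: "u ^ 2 = t" using t(1) by (simp add: u_def)
  have "u ^ 2 \<le> (1/2) ^ 2" using u2 t by (simp add: power2_eq_square)
  then have "u \<le> 1/2" by (rule power2_le_imp_le) simp
  note u = u0 this u2
  have pt: "t ^ sup_dist x v \<le> u ^ nat \<bar>fst v - fst x\<bar> * u ^ nat \<bar>snd v - snd x\<bar>" for v
  proof -
    have "t ^ sup_dist x v = u ^ (2 * sup_dist x v)" using u by (simp add: power_mult)
    also have "\<dots> \<le> u ^ (nat \<bar>fst v - fst x\<bar> + nat \<bar>snd v - snd x\<bar>)"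
      using u by (intro power_decreasing) (auto simp: sup_dist_def)
    also have "\<dots> = u ^ nat \<bar>fst v - fst x\<bar> * u ^ nat \<bar>snd v - snd x\<bar>" by (simp add: power_add)
    finally show ?thesis .
  qed
  have "(\<Sum>v\<in>box n m. t ^ sup_dist x v) \<le> (\<Sum>v\<in>box n m. u ^ nat \<bar>fst v - fst x\<bar> * u ^ nat \<bar>snd v - snd x\<bar>)"
    using pt by (rule sum_mono)
  also have "\<dots> = (\<Sum>a\<in>{- int n..int n}. \<Sum>b\<in>{- int m..int m}. u ^ nat \<bar>a - fst x\<bar> * u ^ nat \<bar>b - snd x\<bar>)"
    by (simp add: box_eq_Times sum.cartesian_product split_beta)
  also have "\<dots> = (\<Sum>a\<in>{- int n..int n}. u ^ nat \<bar>a - fst x\<bar>) * (\<Sum>b\<in>{- int m..int m}. u ^ nat \<bar>b - snd x\<bar>)"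
    by (simp add: sum_product)
  also have "\<dots> \<le> 4 * 4"
    using sum_power_abs_diff_le[OF u(1,2)] u(1) by (intro mult_mono) (auto intro!: sum_nonneg)
  finally show ?thesis by simp
qed

lemma power_le_inverse_square:
  fixes t lam x :: real
  assumes t: "0 < t" "t \<le> exp (- 2 / lam)" and lam: "0 < lam" and x: "1 \<le> x" "lam * ln x \<le> real m"
  shows "t ^ m \<le> 1 / x ^ 2"
proof -
  have "t ^ m \<le> exp (- 2 / lam) ^ m" using t by (intro power_mono) auto
  also have "\<dots> = exp (- 2 * (real m / lam))" by (simp flip: exp_of_nat_mult)
  also have "\<dots> \<le> exp (- 2 * ln x)"
    using x lam by (simp add: field_simps mult.commute)
  also have "\<dots> = 1 / x ^ 2"
  proof -
    have "2 * ln x = ln (x ^ 2)" using x by (simp add: ln_realpow)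
    then have "exp (2 * ln x) = x ^ 2" using x by simp
    then show ?thesis by (simp add: exp_minus inverse_eq_divide)
  qed
  finally show ?thesis .
qed

lemma card_box_power_le:
  fixes t lam :: real
  assumes t: "0 < t" "t \<le> exp (- 2 / lam)" "t \<le> 1" and lam: "0 < lam"
    and nm: "lam * ln (real n) \<le> real m" "m \<le> n"
  shows "real (card (box n m)) * t ^ m \<le> 9"
proof (cases "n = 0")
  case True
  then show ?thesis using nm by (simp add: card_box)
next
  case False
  then have n1: "1 \<le> real n" by simp
  have "real (card (box n m)) = (2 * real n + 1) * (2 * real m + 1)"
    by (simp add: card_box algebra_simps)
  also have "\<dots> \<le> (3 * real n) * (3 * real n)"
    using n1 nm by (intro mult_mono) auto
  also have "\<dots> = 9 * real n ^ 2" by (simp add: power2_eq_square)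
  finally have "real (card (box n m)) * t ^ m \<le> 9 * real n ^ 2 * (1 / real n ^ 2)"
    using power_le_inverse_square[OF t(1,2) lam n1 nm(1)] t by (intro mult_mono) auto
  also have "\<dots> = 9" using n1 by simp
  finally show ?thesis .
qed

section \<open>The Peierls bound\<close>

definition min_certificate_length :: "int \<times> int \<Rightarrow> int \<times> int \<Rightarrow> nat \<Rightarrow> int \<times> int \<Rightarrow> nat" where
  "min_certificate_length x y m z = max 1 (min (min (sup_dist x z) (sup_dist y z)) m)"

lemma certificate_length_ge:
  assumes "certificate n m x y w"
  shows "min_certificate_length x y m (fst (hd w)) \<le> length w"
  using assms by (cases w) (auto simp: certificate_def min_certificate_length_def)

lemma certificate_length_le:
  assumes "certificate n m x y w"
  shows "length w \<le> 2 * card (box_edge_codes n m)"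
proof -
  have "card (set w) \<le> card (box_edge_codes n m)"
    using assms finite_box_edge_codes by (intro card_mono) (auto simp: certificate_def)
  then show ?thesis using assms by (simp add: certificate_def)
qed

lemma finite_Collect_certificate: "finite {w. certificate n m x y w}"
proof (rule finite_subset)
  show "{w. certificate n m x y w}
      \<subseteq> {w. set w \<subseteq> box_edge_codes n m \<and> length w \<le> 2 * card (box_edge_codes n m)}"
  proof
    fix w assume "w \<in> {w. certificate n m x y w}"
    then have w: "certificate n m x y w" by simp
    then have "set w \<subseteq> box_edge_codes n m" by (simp add: certificate_def)
    with certificate_length_le[OF w]
    show "w \<in> {w. set w \<subseteq> box_edge_codes n m \<and> length w \<le> 2 * card (box_edge_codes n m)}"
      by simp
  qed
qed (rule finite_lists_length_le[OF finite_box_edge_codes])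

lemma disconnection_prob_le_certificate_sum:
  fixes p r :: real
  assumes xy: "x \<in> box n m" "y \<in> box n m" "m \<le> n"
    and p: "0 \<le> p" "p \<le> 1" "1 - p \<le> r ^ 2" and r: "0 \<le> r" "r \<le> 1"
  shows "perc_prob p (box_edges n m) (\<lambda>S. \<not> joined S x y) \<le> (\<Sum>w | certificate n m x y w. r ^ length w)"
proof -
  let ?E = "box_edges n m"
  have "perc_prob p ?E (\<lambda>S. \<not> joined S x y)
      \<le> (\<Sum>w | certificate n m x y w. perc_prob p ?E (\<lambda>S. S \<inter> edge_set ` set w = {}))"
  proof (rule perc_prob_union_bound[OF finite_box_edges finite_Collect_certificate p(1,2)])
    fix S assume "\<not> joined S x y"
    with xy obtain w where "certificate n m x y w" "\<forall>e\<in>set w. edge_set e \<notin> S"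
      by (rule closed_certificate_exists)
    then show "\<exists>w\<in>{w. certificate n m x y w}. S \<inter> edge_set ` set w = {}" by blast
  qed
  also have "\<dots> \<le> (\<Sum>w | certificate n m x y w. r ^ length w)"
  proof (rule sum_mono)
    fix w assume "w \<in> {w. certificate n m x y w}"
    then have w: "set w \<subseteq> box_edge_codes n m" "length w \<le> 2 * card (set w)"
      by (auto simp: certificate_def)
    have "edge_set ` set w \<subseteq> ?E" unfolding box_edges_eq_image using w(1) by (rule image_mono)
    then have "perc_prob p ?E (\<lambda>S. S \<inter> edge_set ` set w = {}) = (1 - p) ^ card (edge_set ` set w)"
      using finite_box_edges by (rule perc_prob_avoid[rotated])
    also have "\<dots> = (1 - p) ^ card (set w)"
      using inj_on_subset[OF inj_edge_set subset_UNIV] by (simp add: card_image)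
    also have "\<dots> \<le> r ^ length w"
      using p r w(2) by (intro power_le_power_of_le_square) auto
    finally show "perc_prob p ?E (\<lambda>S. S \<inter> edge_set ` set w = {}) \<le> r ^ length w" .
  qed
  finally show ?thesis .
qed

lemma certificate_sum_le:
  fixes s :: real
  assumes s: "0 \<le> s" "s \<le> 1/2"
  shows "(\<Sum>w | certificate n m x y w. (s / 18) ^ length w)
    \<le> (\<Sum>e0\<in>box_edge_codes n m. s ^ min_certificate_length x y m (fst e0) / 9)"
proof -
  define N where "N = 2 * card (box_edge_codes n m)"
  define R where "R e0 = min_certificate_length x y m (fst e0)" for e0 :: edge
  define f where "f w = (s / 18) ^ length w" for w :: "edge list"
  let ?I = "SIGMA e0:box_edge_codes n m. {R e0..N}"
  have "(\<Sum>w | certificate n m x y w. f w) \<le> (\<Sum>z\<in>?I. \<Sum>w\<in>star_walks (fst z) (snd z). f w)"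
  proof (rule sum_union_bound)
    show "finite ?I" using finite_box_edge_codes by auto
    show "finite (star_walks (fst z) (snd z))" for z by (rule finite_star_walks)
    show "0 \<le> f w" for w using s by (simp add: f_def)
    show "{w. certificate n m x y w} \<subseteq> (\<Union>z\<in>?I. star_walks (fst z) (snd z))"
    proof
      fix w assume "w \<in> {w. certificate n m x y w}"
      then have w: "certificate n m x y w" by simp
      then have "(hd w, length w) \<in> ?I"
        using certificate_length_ge[OF w] certificate_length_le[OF w]
        by (auto simp: certificate_def R_def N_def)
      moreover have "w \<in> star_walks (hd w) (length w)"
        using w by (simp add: certificate_def star_walks_def)
      ultimately show "w \<in> (\<Union>z\<in>?I. star_walks (fst z) (snd z))" by force
    qed
  qed
  also have "\<dots> = (\<Sum>e0\<in>box_edge_codes n m. \<Sum>L\<in>{R e0..N}. \<Sum>w\<in>star_walks e0 L. f w)"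
    using finite_box_edge_codes by (simp add: sum.Sigma split_beta)
  also have "\<dots> \<le> (\<Sum>e0\<in>box_edge_codes n m. s ^ R e0 / 9)"
    unfolding f_def using s by (intro sum_mono sum_star_walks_le) (simp_all add: R_def min_certificate_length_def)
  finally show ?thesis by (simp add: f_def R_def)
qed

lemma sum_times_bool:
  fixes h :: "'a \<Rightarrow> real"
  shows "(\<Sum>z\<in>A \<times> (UNIV :: bool set). h (fst z)) = 2 * sum h A"
proof -
  have "(\<Sum>z\<in>A \<times> (UNIV :: bool set). h (fst z)) = (\<Sum>(v, b)\<in>A \<times> (UNIV :: bool set). h v)"
    by (simp add: split_beta)
  also have "\<dots> = (\<Sum>v\<in>A. \<Sum>b\<in>(UNIV :: bool set). h v)"
    by (rule sum.cartesian_product[symmetric])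
  also have "\<dots> = 2 * sum h A" by (simp add: UNIV_bool sum_distrib_left)
  finally show ?thesis .
qed

lemma min_certificate_length_sum_le:
  fixes t lam :: real
  assumes t: "0 < t" "t \<le> 1/10" "t \<le> exp (- 2 / lam)" and lam: "0 < lam"
    and nm: "lam * ln (real n) \<le> real m" "m \<le> n"
  shows "(\<Sum>e0\<in>box_edge_codes n m. (t ^ 2) ^ min_certificate_length x y m (fst e0) / 9) \<le> 10 * t"
proof -
  define h where "h v = t * (t ^ sup_dist x v + t ^ sup_dist y v + t ^ m) / 9" for v
  have "(\<Sum>e0\<in>box_edge_codes n m. (t ^ 2) ^ min_certificate_length x y m (fst e0) / 9)
      \<le> (\<Sum>e0\<in>box_edge_codes n m. h (fst e0))"
    using t unfolding h_def min_certificate_length_def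
    by (intro sum_mono divide_right_mono power_max_min_le) auto
  also have "\<dots> \<le> (\<Sum>e0\<in>box n m \<times> (UNIV :: bool set). h (fst e0))"
    using t finite_box box_edge_codes_subset by (intro sum_mono2) (auto simp: h_def)
  also have "\<dots> = 2 * t / 9 * ((\<Sum>v\<in>box n m. t ^ sup_dist x v) + (\<Sum>v\<in>box n m. t ^ sup_dist y v)
      + real (card (box n m)) * t ^ m)"
    unfolding sum_times_bool
    by (simp add: h_def sum.distrib sum_distrib_left[symmetric] sum_divide_distrib[symmetric])
  also have "\<dots> \<le> 2 * t / 9 * (16 + 16 + 9)"
    using t lam nm
    by (intro mult_left_mono add_mono sum_box_power_sup_dist_le card_box_power_le) auto
  also have "\<dots> \<le> 10 * t" using t by simp
  finally show ?thesis .
qed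

lemma disconnection_prob_le:
  fixes t lam p :: real
  assumes t: "0 < t" "t \<le> 1/10" "t \<le> exp (- 2 / lam)" and lam: "0 < lam"
    and nm: "lam * ln (real n) \<le> real m" "m \<le> n" and xy: "x \<in> box n m" "y \<in> box n m"
    and p: "1 - (t ^ 2 / 18) ^ 2 \<le> p" "p \<le> 1"
  shows "perc_prob p (box_edges n m) (\<lambda>S. \<not> joined S x y) \<le> 10 * t"
proof -
  have "t ^ 2 \<le> (1/10) ^ 2" using t by (intro power_mono) auto
  then have s: "0 \<le> t ^ 2" "t ^ 2 \<le> 1/2" by (simp_all add: power2_eq_square)
  then have r: "0 \<le> t ^ 2 / 18" "t ^ 2 / 18 \<le> 1" by auto
  then have "(t ^ 2 / 18) ^ 2 \<le> 1" by (rule power_le_one)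
  then have "0 \<le> p" using p by linarith
  have "perc_prob p (box_edges n m) (\<lambda>S. \<not> joined S x y)
      \<le> (\<Sum>w | certificate n m x y w. (t ^ 2 / 18) ^ length w)"
    using xy nm p r \<open>0 \<le> p\<close> by (intro disconnection_prob_le_certificate_sum) auto
  also have "\<dots> \<le> (\<Sum>e0\<in>box_edge_codes n m. (t ^ 2) ^ min_certificate_length x y m (fst e0) / 9)"
    using s by (rule certificate_sum_le)
  also have "\<dots> \<le> 10 * t"
    using t lam nm by (rule min_certificate_length_sum_le)
  finally show ?thesis .
qed

theorem lemma3p2:
  fixes lam eps :: real
  assumes "0 < lam" "lam \<le> 1" "0 < eps" "eps \<le> 1"
  shows "\<exists>p0 < 1. \<forall>n m :: nat. lam * ln (real n) \<le> real m \<and> m \<le> n \<longrightarrow>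
           (\<forall>p. p0 \<le> p \<and> p \<le> 1 \<longrightarrow>
              (\<forall>x \<in> box n m. \<forall>y \<in> box n m.
                  perc_prob p (box_edges n m) (\<lambda>S. joined S x y) \<ge> 1 - eps))"
proof -
  define t where "t = min (eps / 10) (exp (- 2 / lam))"
  have t: "0 < t" "t \<le> 1/10" "t \<le> exp (- 2 / lam)" "10 * t \<le> eps"
    using assms by (auto simp: t_def)
  show ?thesis
  proof (intro exI[of _ "1 - (t ^ 2 / 18) ^ 2"] conjI allI impI ballI)
    show "1 - (t ^ 2 / 18) ^ 2 < 1" using t by simp
    fix n m :: nat and p and x y
    assume "lam * ln (real n) \<le> real m \<and> m \<le> n" "1 - (t ^ 2 / 18) ^ 2 \<le> p \<and> p \<le> 1"
      and "x \<in> box n m" "y \<in> box n m"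
    then have "perc_prob p (box_edges n m) (\<lambda>S. \<not> joined S x y) \<le> 10 * t"
      using t assms(1) by (intro disconnection_prob_le[where lam = lam]) auto
    then show "1 - eps \<le> perc_prob p (box_edges n m) (\<lambda>S. joined S x y)"
      using perc_prob_compl[OF finite_box_edges, of p n m "\<lambda>S. joined S x y"] t by simp
  qed
qed

end
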